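(* Let $\mathcal{C}=\mathcal{I}_{\beta_1}\oplus\mathcal{I}_{\beta_2}$ with $0\le\beta_1<\beta_2\le s$. Then $$N_{\langle\rho\rangle}(\mathcal{C}^{*})=\frac{(q^{d_{\beta_1}}-1)(q^{d_{\beta_2}}-1)\gcd(1+t\alpha_{\beta_1},1+t\alpha_{\beta_2},n)}{tn}+\frac{(q^{d_{\beta_1}}-1)\gcd(1+t\alpha_{\beta_1},n)}{tn}+\frac{(q^{d_{\beta_2}}-1)\gcd(1+t\alpha_{\beta_2},n)}{tn}.$$ Moreover, the number of distinct nonzero Hamming weights of $\mathcal{C}$ is at most $N_{\langle\rho\rangle}(\mathcal{C}^{*})$, with equality if and only if for any two nonzero codewords $c_1,c_2\in\mathcal{C}$ of the same Hamming weight there exists an integer $j$ with $\rho^{j}(c_1)=c_2$.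
   Context: Standing setup: $q$ is a prime power, $n$ a positive integer with $\gcd(n,q)=1$, $\lambda\in\mathbb{F}_q^{*}$ has multiplicative order $t$ (so $t\mid q-1$). $\mathcal{R}=\mathbb{F}_q[x]/\langle x^n-\lambda\rangle$; vectors in $\mathbb{F}_q^n$ are identified with polynomials of degree $<n$, and a $\lambda$-constacyclic code of length $n$ is an ideal of $\mathcal{R}$. Let $\zeta$ be a primitive $tn$-th root of unity in an extension $\mathbb{F}_{q^m}$ with $\zeta^n=\lambda$. The set $\mathcal{S}=\{1+ti:0\le i\le n-1\}$ (residues mod $tn$) is partitioned into the distinct $q$-cyclotomic cosets modulo $tn$, $C_{1+t\alpha_j}=\{(1+t\alpha_j)q^{h}\bmod tn: h\ge 0\}$, $j=0,\dots,s$, with $0=\alpha_0<\dots<\alpha_s\le n-1$ and $d_j=|C_{1+t\alpha_j}|$. Let $m_j(x)=\prod_{h\in C_{1+t\alpha_j}}(x-\zeta^{h})$, and let $\mathcal{I}_j$ be the ideal of $\mathcal{R}$ generated by $(x^n-\lambda)/m_j(x)$ (the irreducible $\lambda$-constacyclic code of dimension $d_j$ corresponding to $C_{1+t\alpha_j}$). The cyclic shift $\rho$ is $\rho(c(x))=xc(x)$ in $\mathcal{R}$, i.e. $(c_0,\dots,c_{n-1})\mapsto(\lambda c_{n-1},c_0,\dots,c_{n-2})$; $\langle\rho\rangle$ has order $tn$. $\mathcal{C}^{*}=\mathcal{C}\setminus\{0\}$, and $N_G(X)$ is the number of orbits of a group $G$ acting on $X$. *)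

theory Defs
  imports "HOL-Computational_Algebra.Polynomial" Complex_Main
begin

definition mord :: "'a::field \<Rightarrow> nat" where
  "mord a = (LEAST k. 0 < k \<and> a ^ k = 1)"

definition cyc_coset :: "nat \<Rightarrow> nat \<Rightarrow> nat \<Rightarrow> nat set" where
  "cyc_coset q N k = {(k * q ^ h) mod N | h. True}"

text \<open>The indices alpha_j: alpha in {0..n-1} such that 1+t*alpha is the smallest
  element of S lying in its cyclotomic coset (so alpha_0 = 0 < alpha_1 < ... < alpha_s).\<close>
definition coset_reps :: "nat \<Rightarrow> nat \<Rightarrow> nat \<Rightarrow> nat set" where
  "coset_reps q t n = {a. a < n \<and> (\<forall>b<a. 1 + t * b \<notin> cyc_coset q (t * n) (1 + t * a))}"

definition cmodulus :: "'a::comm_ring_1 \<Rightarrow> nat \<Rightarrow> 'a poly" where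
  "cmodulus lam n = monom 1 n - [:lam:]"

definition min_poly_coset ::
  "('a::field \<Rightarrow> 'b::field) \<Rightarrow> 'b \<Rightarrow> nat \<Rightarrow> nat \<Rightarrow> nat \<Rightarrow> nat \<Rightarrow> 'a poly" where
  "min_poly_coset emb \<zeta> q t n a =
     (THE p. map_poly emb p = (\<Prod>h\<in>cyc_coset q (t * n) (1 + t * a). [:- (\<zeta> ^ h), 1:]))"

definition irr_code ::
  "('a::field \<Rightarrow> 'b::field) \<Rightarrow> 'b \<Rightarrow> 'a \<Rightarrow> nat \<Rightarrow> nat \<Rightarrow> nat \<Rightarrow> nat \<Rightarrow> 'a poly set" where
  "irr_code emb \<zeta> lam q t n a =
     {(((cmodulus lam n) div (min_poly_coset emb \<zeta> q t n a)) * f) mod (cmodulus lam n) | f. True}"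

definition code_sum :: "'a::comm_ring_1 poly set \<Rightarrow> 'a poly set \<Rightarrow> 'a poly set" where
  "code_sum A B = {x + y | x y. x \<in> A \<and> y \<in> B}"

definition rho :: "'a::field \<Rightarrow> nat \<Rightarrow> 'a poly \<Rightarrow> 'a poly" where
  "rho lam n c = (monom 1 1 * c) mod (cmodulus lam n)"

definition rho_orbit :: "'a::field \<Rightarrow> nat \<Rightarrow> 'a poly \<Rightarrow> 'a poly set" where
  "rho_orbit lam n c = {(rho lam n ^^ j) c | j. True}"

text \<open>Number of orbits of <rho> on a set X (X assumed <rho>-invariant).\<close>
definition num_rho_orbits :: "'a::field \<Rightarrow> nat \<Rightarrow> 'a poly set \<Rightarrow> nat" where
  "num_rho_orbits lam n X = card (rho_orbit lam n ` X)"

definition hamming_wt :: "nat \<Rightarrow> 'a::zero poly \<Rightarrow> nat" where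
  "hamming_wt n c = card {i. i < n \<and> coeff c i \<noteq> 0}"

end

theory Submission
  imports Defs "Berlekamp_Zassenhaus.Finite_Field" "HOL-Combinatorics.Orbits"
begin

(*
  Evaluation at \<zeta>^(1 + t \<alpha>) detects the irreducible code I_\<alpha>: its words vanish at all roots
  of x^n - \<lambda> outside the coset of 1 + t \<alpha>, and a nonzero word cannot vanish there. Hence
  C = I_\<alpha>1 \<oplus> I_\<alpha>2 is a direct sum, and \<rho> multiplies the two evaluations of c = c1 + c2 by
  \<zeta>^(1 + t \<alpha>1) and \<zeta>^(1 + t \<alpha>2). So \<rho>^k fixes c iff t n divides g k, where g is
  gcd (1 + t \<alpha>1) (1 + t \<alpha>2), 1 + t \<alpha>1 or 1 + t \<alpha>2 according to which components of c are
  nonzero. As g is prime to t, the orbit of c has t n / gcd g n elements, and summing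
  1 / |orbit c| over the three kinds of nonzero words counts the orbits. The Hamming weight
  is invariant under \<rho>, so it factors through the orbits.
*)

hide_const (open) up_ring.coeff up_ring.monom module.smult

section \<open>Finite fields\<close>

lemma card_UNIV_field_ge_2: "2 \<le> CARD('a::{field,finite})"
proof -
  have "card {0::'a, 1} \<le> CARD('a)" by (intro card_mono) auto
  thus ?thesis by simp
qed

lemma power_card_minus_1_eq_1:
  fixes z :: "'a::{field,finite}"
  assumes "z \<noteq> 0"
  shows "z ^ (CARD('a) - 1) = 1"
proof -
  let ?U = "UNIV - {0::'a}"
  have "(\<Prod>y\<in>?U. z * y) = \<Prod>?U"
    by (rule prod.reindex_bij_witness[of _ "\<lambda>y. y / z" "\<lambda>y. z * y"]) (use assms in auto)
  moreover have "(\<Prod>y\<in>?U. z * y) = z ^ card ?U * \<Prod>?U"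
    by (simp add: prod.distrib)
  moreover have "\<Prod>?U \<noteq> 0" by simp
  ultimately show ?thesis by (simp add: card_Diff_singleton)
qed

lemma power_card_eq_self:
  fixes z :: "'a::{field,finite}"
  shows "z ^ CARD('a) = z"
proof (cases "z = 0")
  case False
  have "CARD('a) = Suc (CARD('a) - 1)" using card_UNIV_field_ge_2[where 'a='a] by simp
  then show ?thesis using power_card_minus_1_eq_1[OF False] by (metis power_Suc mult_1_right)
qed (use card_UNIV_field_ge_2[where 'a='a] in simp)

lemma mord_pos_power_mord:
  fixes x :: "'a::{field,finite}"
  assumes "x \<noteq> 0"
  shows "0 < mord x" "x ^ mord x = 1"
proof -
  have "\<exists>k. 0 < k \<and> x ^ k = 1"
    using power_card_minus_1_eq_1[OF assms] card_UNIV_field_ge_2[where 'a='a]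
    by (intro exI[of _ "CARD('a) - 1"]) auto
  from LeastI_ex[OF this] show "0 < mord x" "x ^ mord x = 1" unfolding mord_def by auto
qed

lemma power_eq_1_iff_mord_dvd:
  fixes x :: "'a::{field,finite}"
  assumes "x \<noteq> 0"
  shows "x ^ k = 1 \<longleftrightarrow> mord x dvd k"
proof
  note mord = mord_pos_power_mord[OF assms]
  assume "x ^ k = 1"
  moreover have "x ^ k = (x ^ mord x) ^ (k div mord x) * x ^ (k mod mord x)"
    by (metis div_mult_mod_eq power_add power_mult mult.commute)
  ultimately have "x ^ (k mod mord x) = 1" using mord by simp
  moreover have "k mod mord x < mord x" using mord by simp
  ultimately have "k mod mord x = 0"
    using not_less_Least[of "k mod mord x" "\<lambda>k. 0 < k \<and> x ^ k = 1"] unfolding mord_def by auto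
  thus "mord x dvd k" by auto
qed (use mord_pos_power_mord[OF assms] in \<open>auto simp: power_mult\<close>)

lemma of_nat_card_choose_eq_0:
  assumes "0 < k" "k < CARD('a::{field,finite})"
  shows "(of_nat (CARD('a) choose k) :: 'a) = 0"
proof -
  let ?q = "CARD('a)"
  define P :: "'a poly" where "P = [:1, 1:] ^ ?q - monom 1 ?q"
  have coeff_P: "coeff P i = (if i \<le> ?q then of_nat (?q choose i) else 0) - (if i = ?q then 1 else 0)" for i
    unfolding P_def by (auto simp: coeff_linear_poly_power coeff_monom
        intro!: coeff_eq_0 le_less_trans[OF degree_power_le])
  \<comment> \<open>\<open>P\<close> has degree \<open>< q\<close> and, by Fermat, equals \<open>1\<close> at all \<open>q\<close> points.\<close>
  have "P = 1"
  proof (rule poly_eqI_degree[where A = UNIV])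
    show "poly P x = poly 1 x" for x
      unfolding P_def using power_card_eq_self[of "1 + x"] power_card_eq_self[of x]
      by (simp add: poly_monom add.commute)
    show "degree P < CARD('a)"
      using card_UNIV_field_ge_2[where 'a='a] by (intro degree_lessI) (auto simp: coeff_P)
  qed (use card_UNIV_field_ge_2[where 'a='a] in auto)
  thus ?thesis using coeff_P[of k] assms by simp
qed

lemma card_degree_less:
  assumes "0 < d"
  shows "card {p :: 'a::{zero,finite} poly. degree p < d} = CARD('a) ^ d"
proof -
  have "bij_betw Poly {xs :: 'a list. set xs \<subseteq> UNIV \<and> length xs = d} {p. degree p < d}"
  proof (rule bij_betwI[where g = "\<lambda>p. map (coeff p) [0..<d]"])
    show "Poly \<in> {xs. set xs \<subseteq> UNIV \<and> length xs = d} \<rightarrow> {p. degree p < d}"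
      using assms by (auto intro!: degree_lessI simp: nth_default_def)
    show "map (coeff (Poly xs)) [0..<d] = xs" if "xs \<in> {xs. set xs \<subseteq> UNIV \<and> length xs = d}" for xs
      using that by (auto intro: nth_equalityI simp: nth_default_def)
    show "Poly (map (coeff p) [0..<d]) = p" if "p \<in> {p. degree p < d}" for p
      using that by (intro poly_eqI) (auto simp: nth_default_def coeff_eq_0)
  qed auto
  hence "card {p :: 'a poly. degree p < d} = card {xs :: 'a list. set xs \<subseteq> UNIV \<and> length xs = d}"
    by (simp add: bij_betw_same_card)
  also have "\<dots> = CARD('a) ^ d" by (rule card_lists_length_eq) simp
  finally show ?thesis .
qed

section \<open>Orbits of a map\<close>

lemma orbit_eq_if_mem_orbit:
  assumes "x \<in> orbit f x" "y \<in> orbit f x"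
  shows "orbit f y = orbit f x"
  by (metis assms cyclic_on_singleI orbit_cyclic_eq3)

lemma orbit_subset_invariant:
  assumes "\<And>y. y \<in> X \<Longrightarrow> f y \<in> X" "x \<in> X"
  shows "orbit f x \<subseteq> X"
proof
  show "y \<in> X" if "y \<in> orbit f x" for y
    using that by induction (use assms in auto)
qed

lemma card_orbit_eq_period:
  assumes "0 < m" "\<And>k. (f ^^ k) x = x \<longleftrightarrow> m dvd k"
  shows "card (orbit f x) = m"
proof -
  have self: "x \<in> orbit f x"
    using assms(1) assms(2)[of m] unfolding orbit_altdef by (auto intro!: exI[of _ m])
  let ?d = "funpow_dist1 f x x"
  have "card (orbit f x) = ?d"
    unfolding orbit_conv_funpow_dist1[OF self] using card_image[OF inj_on_funpow_dist1[OF self]] by simp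
  moreover have "m dvd ?d" using funpow_dist1_prop[OF self] assms(2) by blast
  moreover have "\<not> m < ?d" using funpow_dist1_least[of m f x x] assms by auto
  ultimately show ?thesis by (simp add: dvd_imp_le order.antisym)
qed

lemma card_orbits_eq_sum:
  assumes fin: "finite X" and inv: "\<And>x. x \<in> X \<Longrightarrow> f x \<in> X"
    and self: "\<And>x. x \<in> X \<Longrightarrow> x \<in> orbit f x"
  shows "real (card (orbit f ` X)) = (\<Sum>x\<in>X. 1 / real (card (orbit f x)))"
proof -
  have fiber: "{x \<in> X. orbit f x = Ob} = Ob" and Ob_ne: "card Ob \<noteq> 0"
    if Ob: "Ob \<in> orbit f ` X" for Ob
  proof -
    obtain y where y: "y \<in> X" "Ob = orbit f y" using Ob by blast
    show "{x \<in> X. orbit f x = Ob} = Ob"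
    proof (intro equalityI subsetI)
      show "x \<in> Ob" if "x \<in> {x \<in> X. orbit f x = Ob}" for x
        using that self by blast
      show "x \<in> {x \<in> X. orbit f x = Ob}" if "x \<in> Ob" for x
      proof -
        have x: "x \<in> orbit f y" using that y(2) by simp
        hence "x \<in> X" using orbit_subset_invariant[of X f, OF inv y(1)] by blast
        moreover have "orbit f x = Ob" using orbit_eq_if_mem_orbit[OF self[OF y(1)] x] y(2) by simp
        ultimately show ?thesis by simp
      qed
    qed
    show "card Ob \<noteq> 0"
      using y finite_orbit[OF self[OF y(1)]] orbit_nonempty[of f y] by simp
  qed
  have "(\<Sum>x\<in>X. 1 / real (card (orbit f x)))
      = (\<Sum>Ob\<in>orbit f ` X. \<Sum>x\<in>{x \<in> X. orbit f x = Ob}. 1 / real (card (orbit f x)))"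
    by (rule sum.image_gen[OF fin])
  also have "\<dots> = (\<Sum>Ob\<in>orbit f ` X. \<Sum>x\<in>Ob. 1 / real (card Ob))"
  proof (rule sum.cong[OF refl])
    fix Ob assume "Ob \<in> orbit f ` X"
    thus "(\<Sum>x\<in>{x \<in> X. orbit f x = Ob}. 1 / real (card (orbit f x))) = (\<Sum>x\<in>Ob. 1 / real (card Ob))"
      using fiber by (metis (mono_tags, lifting) mem_Collect_eq sum.cong)
  qed
  also have "\<dots> = (\<Sum>Ob\<in>orbit f ` X. 1)"
    using Ob_ne by (intro sum.cong refl) simp
  finally show ?thesis by simp
qed

lemma card_invariant_image_le_card_orbits:
  assumes fin: "finite X" and self: "\<And>x. x \<in> X \<Longrightarrow> x \<in> orbit f x"
    and const: "\<And>x y. x \<in> X \<Longrightarrow> y \<in> orbit f x \<Longrightarrow> F y = F x"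
  shows "card (F ` X) \<le> card (orbit f ` X)"
    and "card (F ` X) = card (orbit f ` X) \<longleftrightarrow> (\<forall>x\<in>X. \<forall>y\<in>X. F x = F y \<longrightarrow> y \<in> orbit f x)"
proof -
  define G where "G Ob = F (SOME x. x \<in> Ob)" for Ob
  have G: "G (orbit f x) = F x" if "x \<in> X" for x
    using someI[of "\<lambda>y. y \<in> orbit f x", OF self[OF that]] const[OF that] by (simp add: G_def)
  have img: "F ` X = G ` orbit f ` X"
    by (simp add: image_image G cong: image_cong)
  show "card (F ` X) \<le> card (orbit f ` X)"
    unfolding img using fin by (intro card_image_le) simp
  have "card (F ` X) = card (orbit f ` X) \<longleftrightarrow> inj_on G (orbit f ` X)"
    unfolding img using fin by (intro eq_card_imp_inj_on inj_on_iff_eq_card[symmetric]) simp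
  also have "\<dots> \<longleftrightarrow> (\<forall>x\<in>X. \<forall>y\<in>X. F x = F y \<longrightarrow> orbit f x = orbit f y)"
    by (auto simp: inj_on_def G)
  also have "\<dots> \<longleftrightarrow> (\<forall>x\<in>X. \<forall>y\<in>X. F x = F y \<longrightarrow> y \<in> orbit f x)"
    using orbit_eq_if_mem_orbit self by metis
  finally show "card (F ` X) = card (orbit f ` X) \<longleftrightarrow>
      (\<forall>x\<in>X. \<forall>y\<in>X. F x = F y \<longrightarrow> y \<in> orbit f x)" .
qed

lemma dvd_mult_iff_div_gcd_dvd:
  fixes m g k :: nat
  assumes "0 < m"
  shows "m dvd g * k \<longleftrightarrow> m div gcd m g dvd k"
proof -
  define d where "d = gcd m g"
  have "0 < d" using assms by (simp add: d_def)
  have m: "m = d * (m div d)" and g: "g = d * (g div d)" by (simp_all add: d_def)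
  have "m dvd g * k \<longleftrightarrow> d * (m div d) dvd d * (g div d * k)"
    by (metis m g mult.assoc)
  also have "\<dots> \<longleftrightarrow> m div d dvd g div d * k" using \<open>0 < d\<close> by simp
  also have "\<dots> \<longleftrightarrow> m div d dvd k"
    using div_gcd_coprime[of m g] assms by (simp add: d_def coprime_dvd_mult_right_iff)
  finally show ?thesis by (simp add: d_def)
qed

lemma sum_pairs_nonzero:
  fixes A :: "'a::zero set" and B :: "'b::zero set" and f :: "bool \<Rightarrow> bool \<Rightarrow> real"
  assumes "finite A" "finite B" "0 \<in> A" "0 \<in> B"
  shows "(\<Sum>p\<in>A \<times> B - {(0, 0)}. f (fst p \<noteq> 0) (snd p \<noteq> 0))
       = real (card A - 1) * real (card B - 1) * f True True
       + real (card A - 1) * f True False + real (card B - 1) * f False True"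
proof -
  let ?A = "A - {0}" and ?B = "B - {0}"
  have split: "A \<times> B - {(0, 0)} = ?A \<times> ?B \<union> ?A \<times> {0} \<union> {0} \<times> ?B"
    using assms by auto
  let ?g = "\<lambda>p :: 'a \<times> 'b. f (fst p \<noteq> 0) (snd p \<noteq> 0)"
  have "sum ?g (A \<times> B - {(0, 0)}) = sum ?g (?A \<times> ?B \<union> ?A \<times> {0}) + sum ?g ({0} \<times> ?B)"
    unfolding split using assms by (intro sum.union_disjoint) auto
  also have "sum ?g (?A \<times> ?B \<union> ?A \<times> {0}) = sum ?g (?A \<times> ?B) + sum ?g (?A \<times> {0})"
    using assms by (intro sum.union_disjoint) auto
  also have "sum ?g (?A \<times> ?B) = (\<Sum>p\<in>?A \<times> ?B. f True True)"
    by (rule sum.cong[OF refl]) (simp add: mem_Times_iff)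
  also have "sum ?g (?A \<times> {0}) = (\<Sum>p\<in>?A \<times> {0::'b}. f True False)"
    by (rule sum.cong[OF refl]) (simp add: mem_Times_iff)
  also have "sum ?g ({0} \<times> ?B) = (\<Sum>p\<in>{0::'a} \<times> ?B. f False True)"
    by (rule sum.cong[OF refl]) (simp add: mem_Times_iff)
  finally show ?thesis
    using assms by (simp add: card_cartesian_product card_Diff_singleton)
qed

section \<open>Cyclotomic cosets\<close>

lemma cyc_coset_subset_lessThan: "0 < N \<Longrightarrow> cyc_coset q N a \<subseteq> {..<N}"
  by (auto simp: cyc_coset_def)

lemma finite_cyc_coset: "0 < N \<Longrightarrow> finite (cyc_coset q N a)"
  by (rule finite_subset[OF cyc_coset_subset_lessThan]) simp_all

lemma mod_in_cyc_coset: "a mod N \<in> cyc_coset q N a"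
  unfolding cyc_coset_def by (auto intro!: exI[of _ 0])

lemma cyc_coset_mod: "cyc_coset q N (a mod N) = cyc_coset q N a"
  unfolding cyc_coset_def by (simp add: mod_mult_left_eq)

lemma mult_mod_in_cyc_coset:
  assumes "x \<in> cyc_coset q N a"
  shows "(x * q ^ k) mod N \<in> cyc_coset q N a"
proof -
  obtain h where "x = (a * q ^ h) mod N" using assms by (auto simp: cyc_coset_def)
  hence "(x * q ^ k) mod N = (a * q ^ (h + k)) mod N"
    by (simp add: mod_mult_left_eq power_add mult.assoc)
  thus ?thesis by (auto simp: cyc_coset_def)
qed

lemma cyc_coset_subset:
  assumes "x \<in> cyc_coset q N a"
  shows "cyc_coset q N x \<subseteq> cyc_coset q N a"
proof
  fix y assume "y \<in> cyc_coset q N x"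
  then obtain k where "y = (x * q ^ k) mod N" by (auto simp: cyc_coset_def)
  thus "y \<in> cyc_coset q N a" using mult_mod_in_cyc_coset[OF assms] by simp
qed

lemma cyc_coset_eq:
  assumes "coprime q N" "0 < N" "x \<in> cyc_coset q N a"
  shows "cyc_coset q N x = cyc_coset q N a"
proof (rule order.antisym[OF cyc_coset_subset[OF assms(3)]])
  obtain h where x: "x = (a * q ^ h) mod N" using assms(3) by (auto simp: cyc_coset_def)
  define e where "e = totient N"
  have "0 < e" using assms(2) by (simp add: e_def)
  \<comment> \<open>Euler: multiplying by \<open>q ^ (h * (e - 1))\<close> undoes the multiplication by \<open>q ^ h\<close>.\<close>
  have "[q ^ e = 1] (mod N)" using euler_theorem[OF assms(1)] by (simp add: e_def)
  hence "[a * (q ^ e) ^ h = a * 1 ^ h] (mod N)" by (intro cong_mult cong_pow) auto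
  moreover have "h + h * (e - 1) = e * h" using \<open>0 < e\<close> by (cases e) (auto simp: algebra_simps)
  ultimately have "[x * q ^ (h * (e - 1)) = a] (mod N)"
    unfolding x by (simp add: cong_def mod_mult_left_eq mult.assoc flip: power_add power_mult)
  hence "a mod N \<in> cyc_coset q N x"
    unfolding cyc_coset_def cong_def by (auto intro!: exI[of _ "h * (e - 1)"])
  thus "cyc_coset q N a \<subseteq> cyc_coset q N x"
    using cyc_coset_subset cyc_coset_mod by metis
qed

lemma cyc_coset_disjoint:
  assumes "coprime q N" "0 < N" "cyc_coset q N a \<noteq> cyc_coset q N b"
  shows "cyc_coset q N a \<inter> cyc_coset q N b = {}"
  using cyc_coset_eq[OF assms(1,2)] assms(3) by blast

lemma bij_betw_mult_cyc_coset:
  assumes "coprime q N" "0 < N"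
  shows "bij_betw (\<lambda>h. (h * q) mod N) (cyc_coset q N a) (cyc_coset q N a)"
proof -
  have "inj_on (\<lambda>h. (h * q) mod N) (cyc_coset q N a)"
  proof (rule inj_onI)
    fix x y assume "x \<in> cyc_coset q N a" "y \<in> cyc_coset q N a" "(x * q) mod N = (y * q) mod N"
    moreover from this(3) have "[x = y] (mod N)"
      using assms(1) cong_mult_rcancel_nat by (auto simp: cong_def)
    moreover have "x < N" "y < N"
      using calculation(1,2) cyc_coset_subset_lessThan[OF assms(2), of q a] by auto
    ultimately show "x = y" by (simp add: cong_def)
  qed
  moreover have "(\<lambda>h. (h * q) mod N) ` cyc_coset q N a \<subseteq> cyc_coset q N a"
    using mult_mod_in_cyc_coset[where k = 1] by auto
  ultimately show ?thesis
    using finite_cyc_coset[OF assms(2)] by (simp add: bij_betw_def endo_inj_surj)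
qed

lemma cyc_coset_cong:
  assumes "[q = 1] (mod t)" "t dvd N" "x \<in> cyc_coset q N a"
  shows "[x = a] (mod t)"
proof -
  obtain h where x: "x = (a * q ^ h) mod N" using assms(3) by (auto simp: cyc_coset_def)
  have "[x = a * q ^ h] (mod t)" unfolding x using assms(2) by (simp add: cong_def mod_mod_cancel)
  also have "[a * q ^ h = a * 1 ^ h] (mod t)" by (intro cong_mult cong_pow assms(1) cong_refl)
  finally show ?thesis by simp
qed

section \<open>The constacyclic shift\<close>

lemma coeff_cmodulus_n: "0 < n \<Longrightarrow> coeff (cmodulus lam n) n = 1"
  by (simp add: cmodulus_def coeff_monom coeff_const)

lemma degree_cmodulus:
  assumes "0 < n"
  shows "degree (cmodulus lam n) = n"
proof -
  note coeff_cmodulus_n[OF assms, of lam]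
  moreover have "degree (cmodulus lam n) \<le> n"
    unfolding cmodulus_def by (intro degree_diff_le) (auto simp: degree_monom_le)
  ultimately show ?thesis by (metis le_antisym le_degree one_neq_zero)
qed

lemma cmodulus_nonzero: "0 < n \<Longrightarrow> cmodulus lam n \<noteq> 0"
  using degree_cmodulus[of n lam] by (metis degree_0 less_numeral_extra(3))

lemma degree_mod_cmodulus_less: "0 < n \<Longrightarrow> degree (p mod cmodulus lam n) < n"
  using degree_mod_less'[of "cmodulus lam n" p] cmodulus_nonzero[of n lam] degree_cmodulus[of n lam]
  by (cases "p mod cmodulus lam n = 0") auto

lemma degree_rho_less: "0 < n \<Longrightarrow> degree (rho lam n c) < n"
  unfolding rho_def by (rule degree_mod_cmodulus_less)

lemma coeff_rho:
  fixes lam :: "'a::field"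
  assumes "0 < n" "degree c < n" "j < n"
  shows "coeff (rho lam n c) j = (if j = 0 then lam * coeff c (n - 1) else coeff c (j - 1))"
proof -
  let ?r = "monom 1 1 * c - smult (coeff c (n - 1)) (cmodulus lam n)"
  have coeff_r: "coeff ?r i = (if i = 0 then lam * coeff c (n - 1) else if i = n then 0 else coeff c (i - 1))" for i
    using assms(1) by (cases "i = n") (auto simp: coeff_monom_mult cmodulus_def coeff_monom coeff_const)
  \<comment> \<open>\<open>?r\<close> is already reduced, so it is the remainder.\<close>
  have "\<forall>k\<ge>n. coeff ?r k = 0"
    unfolding coeff_r using assms(1,2) by (auto intro: coeff_eq_0)
  hence "degree ?r < n" using assms(1) by (intro degree_lessI) auto
  have "monom 1 1 * c = ?r + [:coeff c (n - 1):] * cmodulus lam n" by simp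
  hence "rho lam n c = ?r mod cmodulus lam n" unfolding rho_def by (metis mod_mult_self1)
  also have "\<dots> = ?r" using \<open>degree ?r < n\<close> degree_cmodulus[OF assms(1), of lam] by (intro mod_poly_less) simp
  finally have rho_eq: "rho lam n c = ?r" .
  show ?thesis unfolding rho_eq coeff_r using assms(3) by simp
qed

lemma hamming_wt_rho:
  fixes lam :: "'a::field"
  assumes "0 < n" "lam \<noteq> 0" "degree c < n"
  shows "hamming_wt n (rho lam n c) = hamming_wt n c"
proof -
  let ?s = "\<lambda>i. Suc i mod n"
  have inj: "inj_on ?s {..<n}" unfolding inj_on_def by (auto simp: mod_Suc split: if_split_asm)
  hence surj: "?s ` {..<n} = {..<n}" using assms(1) by (simp add: endo_inj_surj image_subsetI)
  have nz: "coeff (rho lam n c) (?s i) \<noteq> 0 \<longleftrightarrow> coeff c i \<noteq> 0" if "i < n" for i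
    using that assms by (cases "Suc i = n") (auto simp: coeff_rho)
  have "{j. j < n \<and> coeff (rho lam n c) j \<noteq> 0} = ?s ` {i. i < n \<and> coeff c i \<noteq> 0}"
  proof (intro equalityI subsetI)
    fix j assume j: "j \<in> {j. j < n \<and> coeff (rho lam n c) j \<noteq> 0}"
    then obtain i where "i < n" "j = ?s i" using surj by blast
    with j nz show "j \<in> ?s ` {i. i < n \<and> coeff c i \<noteq> 0}" by blast
  next
    fix j assume "j \<in> ?s ` {i. i < n \<and> coeff c i \<noteq> 0}"
    then obtain i where "i < n" "coeff c i \<noteq> 0" "j = ?s i" by blast
    with nz assms(1) show "j \<in> {j. j < n \<and> coeff (rho lam n c) j \<noteq> 0}" by simp
  qed
  moreover have "inj_on ?s {i. i < n \<and> coeff c i \<noteq> 0}" by (rule inj_on_subset[OF inj]) auto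
  ultimately show ?thesis unfolding hamming_wt_def by (simp add: card_image)
qed

lemma hamming_wt_funpow_rho:
  fixes lam :: "'a::field"
  assumes "0 < n" "lam \<noteq> 0" "degree c < n"
  shows "hamming_wt n ((rho lam n ^^ j) c) = hamming_wt n c"
proof (induction j)
  case (Suc j)
  have "degree ((rho lam n ^^ j) c) < n"
    using assms by (cases j) (auto simp: degree_rho_less)
  thus ?case using Suc assms by (simp add: hamming_wt_rho)
qed simp

lemma rho_add: "rho lam n (c + d) = rho lam n c + rho lam n d"
  unfolding rho_def by (simp add: distrib_left poly_mod_add_left)

lemma funpow_rho_add: "(rho lam n ^^ j) (c + d) = (rho lam n ^^ j) c + (rho lam n ^^ j) d"
  by (induction j) (simp_all add: rho_add)

lemma funpow_rho_zero: "(rho lam n ^^ j) 0 = 0"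
  by (induction j) (simp_all add: rho_def)

section \<open>Extensions of finite fields\<close>

locale finite_field_extension = field_hom emb
  for emb :: "'a::{field,finite} \<Rightarrow> 'b::{field,finite}"
begin

sublocale emb_poly: map_poly_inj_idom_hom emb ..

lemma power_card_add: "(x + y :: 'b) ^ CARD('a) = x ^ CARD('a) + y ^ CARD('a)"
proof -
  have choose_0: "(of_nat (CARD('a) choose k) :: 'b) = 0" if "0 < k" "k < CARD('a)" for k
    using of_nat_card_choose_eq_0[OF that] hom_of_nat[of "CARD('a) choose k"] by simp
  have "(x + y) ^ CARD('a) = (\<Sum>k\<le>CARD('a). of_nat (CARD('a) choose k) * x ^ k * y ^ (CARD('a) - k))"
    by (simp add: binomial_ring)
  also have "\<dots> = (\<Sum>k\<in>{0, CARD('a)}. of_nat (CARD('a) choose k) * x ^ k * y ^ (CARD('a) - k))"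
    using choose_0 by (intro sum.mono_neutral_right) auto
  also have "\<dots> = x ^ CARD('a) + y ^ CARD('a)"
    using card_UNIV_field_ge_2[where 'a='a] by simp
  finally show ?thesis .
qed

definition frobenius :: "'b \<Rightarrow> 'b" where
  "frobenius x = x ^ CARD('a)"

sublocale frobenius: comm_ring_hom frobenius
  using card_UNIV_field_ge_2[where 'a='a]
  by unfold_locales (auto simp: frobenius_def power_card_add power_mult_distrib)

sublocale frobenius_poly: map_poly_comm_ring_hom frobenius ..

lemma power_card_emb: "emb x ^ CARD('a) = emb x"
  using power_card_eq_self[of x] by (simp flip: hom_power)

lemma power_card_eq_self_iff: "x ^ CARD('a) = x \<longleftrightarrow> x \<in> range emb"
proof
  assume x: "x ^ CARD('a) = x"
  \<comment> \<open>\<open>X ^ q - X\<close> has at most \<open>q\<close> roots, and the \<open>q\<close> elements of \<open>range emb\<close>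
    are roots.\<close>
  define P :: "'b poly" where "P = monom 1 CARD('a) - [:0, 1:]"
  have "coeff P CARD('a) = 1"
    using card_UNIV_field_ge_2[where 'a='a] by (simp add: P_def coeff_monom coeff_pCons split: nat.split)
  hence "P \<noteq> 0" by auto
  moreover have "degree P \<le> CARD('a)"
    unfolding P_def using card_UNIV_field_ge_2[where 'a='a]
    by (intro degree_diff_le) (auto simp: degree_monom_le)
  ultimately have "card {x. poly P x = 0} \<le> CARD('a)"
    using card_poly_roots_bound[of P] by simp
  moreover have "{x. poly P x = 0} = {x. x ^ CARD('a) = x}" by (auto simp: P_def poly_monom)
  moreover have "card (range emb) = CARD('a)" by (metis card_image injI injectivity)
  ultimately have "card {x::'b. x ^ CARD('a) = x} \<le> card (range emb)" by simp
  moreover have "range emb \<subseteq> {x. x ^ CARD('a) = x}" using power_card_emb by auto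
  ultimately have "range emb = {x. x ^ CARD('a) = x}"
    by (intro card_seteq) auto
  thus "x \<in> range emb" using x by simp
qed (auto simp: power_card_emb)

lemma ex_map_poly_emb_if_frobenius_fixed:
  assumes "map_poly frobenius p = p"
  shows "\<exists>p'. map_poly emb p' = p"
proof -
  have coeff_range: "coeff p i \<in> range emb" for i
    using arg_cong[OF assms, of "\<lambda>p. coeff p i"] power_card_eq_self_iff
    by (simp add: coeff_map_poly frobenius_def)
  have "inv_into UNIV emb 0 = 0" by (metis hom_zero inv_into_f_f injectivity injI UNIV_I)
  hence "map_poly emb (map_poly (inv_into UNIV emb) p) = p"
    by (intro poly_eqI) (simp add: coeff_map_poly f_inv_into_f[OF coeff_range])
  thus ?thesis by blast
qed

definition eval_emb :: "'b \<Rightarrow> 'a poly \<Rightarrow> 'b" where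
  "eval_emb z c = poly (map_poly emb c) z"

lemma eval_emb_simps [simp]:
  "eval_emb z 0 = 0"
  "eval_emb z (c + d) = eval_emb z c + eval_emb z d"
  "eval_emb z (c - d) = eval_emb z c - eval_emb z d"
  "eval_emb z (c * d) = eval_emb z c * eval_emb z d"
  "eval_emb z (monom 1 (Suc 0)) = z"
  by (simp_all add: eval_emb_def hom_distribs poly_monom)

lemma eval_emb_mod:
  assumes "eval_emb z p = 0"
  shows "eval_emb z (c mod p) = eval_emb z c"
proof -
  have "c = c div p * p + c mod p" by simp
  hence "eval_emb z c = eval_emb z (c div p) * eval_emb z p + eval_emb z (c mod p)"
    by (metis eval_emb_simps(2,4))
  thus ?thesis using assms by simp
qed

lemma eval_emb_power_card: "eval_emb (z ^ CARD('a)) c = eval_emb z c ^ CARD('a)"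
proof -
  have "map_poly frobenius (map_poly emb c) = map_poly emb c"
    by (intro poly_eqI) (simp add: coeff_map_poly frobenius_def power_card_emb)
  thus ?thesis
    using frobenius.poly_map_poly[of "map_poly emb c" z] by (simp add: eval_emb_def frobenius_def)
qed

lemma eval_emb_power_card_power: "eval_emb (z ^ CARD('a) ^ k) c = eval_emb z c ^ CARD('a) ^ k"
proof (induction k)
  case (Suc k)
  have "w ^ CARD('a) ^ Suc k = (w ^ CARD('a) ^ k) ^ CARD('a)" for w :: 'b
    by (metis power_mult mult.commute power_Suc2)
  thus ?case using Suc eval_emb_power_card by metis
qed simp

lemma eval_emb_cmodulus: "eval_emb z (cmodulus lam n) = z ^ n - emb lam"
  by (simp add: eval_emb_def cmodulus_def hom_distribs poly_monom)

lemma eval_emb_rho: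
  assumes "z ^ n = emb lam"
  shows "eval_emb z (rho lam n c) = z * eval_emb z c"
  using assms by (simp add: rho_def eval_emb_mod eval_emb_cmodulus)

lemma eval_emb_funpow_rho:
  assumes "z ^ n = emb lam"
  shows "eval_emb z ((rho lam n ^^ j) c) = z ^ j * eval_emb z c"
  by (induction j) (simp_all add: eval_emb_rho[OF assms])

end

section \<open>Roots of \<open>x ^ n - \<lambda>\<close> and the irreducible codes\<close>

locale constacyclic_setting = finite_field_extension emb
  for emb :: "'a::{field,finite} \<Rightarrow> 'b::{field,finite}" +
  fixes lam :: 'a and \<zeta> :: 'b and q n t :: nat
  assumes q_def: "q = CARD('a)"
    and n_pos: "0 < n"
    and coprime_n_q: "coprime n q"
    and lam_nonzero: "lam \<noteq> 0"
    and t_def: "t = mord lam"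
    and zeta_nonzero: "\<zeta> \<noteq> 0"
    and mord_zeta: "mord \<zeta> = t * n"
    and zeta_power_n: "\<zeta> ^ n = emb lam"
begin

lemma t_pos: "0 < t"
  using mord_pos_power_mord(1)[OF lam_nonzero] t_def by simp

lemma tn_pos: "0 < t * n" using t_pos n_pos by simp

lemma cong_q_1: "[q = 1] (mod t)"
proof -
  have "lam ^ (q - 1) = 1" using power_card_minus_1_eq_1[OF lam_nonzero] q_def by simp
  hence "t dvd q - 1" using power_eq_1_iff_mord_dvd[OF lam_nonzero] t_def by simp
  moreover have "1 \<le> q" using card_UNIV_field_ge_2[where 'a='a] q_def by simp
  ultimately show ?thesis by (simp add: cong_altdef_nat)
qed

lemma coprime_q_tn: "coprime q (t * n)"
proof -
  have "coprime q t" using cong_imp_coprime[OF cong_sym[OF cong_q_1]] by simp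
  thus ?thesis using coprime_n_q by (simp add: coprime_commute)
qed

lemma zeta_power_eq_1_iff: "\<zeta> ^ k = 1 \<longleftrightarrow> t * n dvd k"
  using power_eq_1_iff_mord_dvd[OF zeta_nonzero] mord_zeta by simp

lemma zeta_power_mod: "\<zeta> ^ (k mod (t * n)) = \<zeta> ^ k"
proof -
  have "\<zeta> ^ k = (\<zeta> ^ (t * n)) ^ (k div (t * n)) * \<zeta> ^ (k mod (t * n))"
    by (metis div_mult_mod_eq power_add power_mult mult.commute)
  moreover have "\<zeta> ^ (t * n) = 1" using zeta_power_eq_1_iff by simp
  ultimately show ?thesis by simp
qed

lemma inj_on_zeta_power: "inj_on (\<lambda>h. \<zeta> ^ h) {..<t * n}"
proof -
  have "i = j" if "i \<le> j" "j < t * n" "\<zeta> ^ i = \<zeta> ^ j" for i j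
  proof -
    have "\<zeta> ^ j = \<zeta> ^ i * \<zeta> ^ (j - i)" using that(1) by (simp flip: power_add)
    hence "t * n dvd j - i" using that(3) zeta_nonzero zeta_power_eq_1_iff by simp
    moreover have "j - i < t * n" using that(2) by simp
    ultimately show "i = j" using that(1) by (metis diff_is_0_eq dvd_imp_le le_antisym not_le zero_less_diff)
  qed
  thus ?thesis unfolding inj_on_def by (metis lessThan_iff nat_le_linear)
qed

lemma zeta_power_root:
  assumes "[h = 1] (mod t)"
  shows "(\<zeta> ^ h) ^ n = emb lam"
proof -
  have "(h * n) mod (t * n) = (1 * n) mod (t * n)"
    using assms by (simp add: cong_def mod_mult_mult2)
  hence "\<zeta> ^ (h * n) = \<zeta> ^ n" by (metis zeta_power_mod mult_1)
  thus ?thesis by (simp add: power_mult zeta_power_n)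
qed

abbreviation coset :: "nat \<Rightarrow> nat set" where
  "coset a \<equiv> cyc_coset q (t * n) (1 + t * a)"

lemma finite_coset: "finite (coset a)"
  using finite_cyc_coset[OF tn_pos] .

lemma card_coset_pos: "0 < card (coset a)"
  using finite_coset mod_in_cyc_coset[of "1 + t * a" "t * n" q] by (auto simp: card_gt_0_iff)

(* The exponents h of the roots \<zeta>^h of x^n - \<lambda>: the paper's set S, reduced modulo t n. *)
definition root_exps :: "nat set" where
  "root_exps = {h. h < t * n \<and> [h = 1] (mod t)}"

lemma finite_root_exps: "finite root_exps"
  by (simp add: root_exps_def)

lemma card_root_exps: "card root_exps = n"
proof -
  \<comment> \<open>An exponent \<open>h \<equiv> 1 (mod t)\<close> is determined by its quotient \<open>h div t\<close>.\<close>
  have "bij_betw (\<lambda>h. h div t) root_exps {..<n}"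
  proof (rule bij_betwI[where g = "\<lambda>i. t * i + 1 mod t"])
    show "(\<lambda>h. h div t) \<in> root_exps \<rightarrow> {..<n}"
    proof
      fix h assume "h \<in> root_exps"
      hence "h < n * t" by (simp add: root_exps_def mult.commute)
      thus "h div t \<in> {..<n}" by (simp add: less_mult_imp_div_less)
    qed
    have "t * i + 1 mod t < t * n" if "i < n" for i
    proof -
      have "t * i + 1 mod t < t * (i + 1)" using t_pos by simp
      also have "\<dots> \<le> t * n" using that by (intro mult_le_mono2) simp
      finally show ?thesis .
    qed
    thus "(\<lambda>i. t * i + 1 mod t) \<in> {..<n} \<rightarrow> root_exps"
      by (auto simp: root_exps_def cong_def)
    show "t * (h div t) + 1 mod t = h" if "h \<in> root_exps" for h
      using that div_mult_mod_eq[of h t] by (simp add: root_exps_def cong_def mult.commute)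
    show "(t * i + 1 mod t) div t = i" for i
      using t_pos by simp
  qed
  thus ?thesis by (simp add: bij_betw_same_card)
qed

lemma coset_subset_root_exps: "coset a \<subseteq> root_exps"
proof
  fix x assume x: "x \<in> coset a"
  have "[x = 1 + t * a] (mod t)" by (rule cyc_coset_cong[OF cong_q_1 _ x]) simp
  also have "[1 + t * a = 1] (mod t)" unfolding cong_def by (rule mod_mult_self2)
  finally show "x \<in> root_exps"
    using x cyc_coset_subset_lessThan[OF tn_pos] by (auto simp: root_exps_def)
qed

lemma card_zeta_power_root_exps: "card ((\<lambda>h. \<zeta> ^ h) ` root_exps) = n"
  using inj_on_subset[OF inj_on_zeta_power, of root_exps] card_root_exps
  by (simp add: card_image root_exps_def subset_eq)

lemma root_exps_root: "h \<in> root_exps \<Longrightarrow> (\<zeta> ^ h) ^ n = emb lam"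
  by (simp add: root_exps_def zeta_power_root)

definition root_poly :: "nat set \<Rightarrow> 'b poly" where
  "root_poly A = (\<Prod>h\<in>A. [:- (\<zeta> ^ h), 1:])"

lemma degree_root_poly: "finite A \<Longrightarrow> degree (root_poly A) = card A"
  unfolding root_poly_def by (subst degree_prod_eq_sum_degree) auto

lemma lead_coeff_root_poly: "lead_coeff (root_poly A) = 1"
  unfolding root_poly_def lead_coeff_prod by simp

lemma root_poly_nonzero: "root_poly A \<noteq> 0"
  using lead_coeff_root_poly[of A] by auto

lemma poly_root_poly_eq_0: "finite A \<Longrightarrow> h \<in> A \<Longrightarrow> poly (root_poly A) (\<zeta> ^ h) = 0"
  unfolding root_poly_def poly_prod by (rule prod_zero) auto

lemma root_poly_split: "root_poly root_exps = root_poly (coset a) * root_poly (root_exps - coset a)"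
  unfolding root_poly_def using prod.subset_diff[OF coset_subset_root_exps finite_root_exps]
  by (simp add: mult.commute)

lemma map_poly_cmodulus: "map_poly emb (cmodulus lam n) = root_poly root_exps"
proof (rule poly_eqI_degree_lead_coeff[where n = n and A = "(\<lambda>h. \<zeta> ^ h) ` root_exps"])
  show "coeff (map_poly emb (cmodulus lam n)) n = coeff (root_poly root_exps) n"
    using lead_coeff_root_poly[of root_exps] degree_root_poly[OF finite_root_exps] card_root_exps
      coeff_cmodulus_n[OF n_pos, of lam] by (simp add: coeff_map_poly)
  show "n \<le> card ((\<lambda>h. \<zeta> ^ h) ` root_exps)" using card_zeta_power_root_exps by simp
  show "degree (map_poly emb (cmodulus lam n)) \<le> n" using degree_cmodulus[OF n_pos, of lam] by simp
  show "degree (root_poly root_exps) \<le> n"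
    using degree_root_poly[OF finite_root_exps] card_root_exps by simp
  fix z assume "z \<in> (\<lambda>h. \<zeta> ^ h) ` root_exps"
  then obtain h where h: "h \<in> root_exps" "z = \<zeta> ^ h" by blast
  show "poly (map_poly emb (cmodulus lam n)) z = poly (root_poly root_exps) z"
    using eval_emb_cmodulus[of z lam n] root_exps_root[OF h(1)] poly_root_poly_eq_0[OF finite_root_exps h(1)] h(2)
    by (simp add: eval_emb_def)
qed

lemma frobenius_root_poly_coset: "map_poly frobenius (root_poly (coset a)) = root_poly (coset a)"
proof -
  have lin: "map_poly frobenius [:- z, 1:] = [:- (z ^ q), 1:]" for z
    using frobenius.hom_uminus[of z]
    by (intro poly_eqI) (auto simp: coeff_map_poly coeff_pCons frobenius_def q_def split: nat.split)
  have "map_poly frobenius (root_poly (coset a)) = (\<Prod>h\<in>coset a. [:- (\<zeta> ^ ((h * q) mod (t * n))), 1:])"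
    unfolding root_poly_def frobenius_poly.hom_prod lin by (simp add: zeta_power_mod power_mult)
  also have "\<dots> = root_poly (coset a)"
    unfolding root_poly_def
    using prod.reindex_bij_betw[OF bij_betw_mult_cyc_coset[OF coprime_q_tn tn_pos], of "\<lambda>h. [:- (\<zeta> ^ h), 1:]"]
    by simp
  finally show ?thesis .
qed

abbreviation min_poly :: "nat \<Rightarrow> 'a poly" where
  "min_poly a \<equiv> min_poly_coset emb \<zeta> q t n a"

lemma map_poly_min_poly: "map_poly emb (min_poly a) = root_poly (coset a)"
proof -
  obtain p where p: "map_poly emb p = root_poly (coset a)"
    using ex_map_poly_emb_if_frobenius_fixed[OF frobenius_root_poly_coset] by blast
  have "map_poly emb (THE p. map_poly emb p = root_poly (coset a)) = root_poly (coset a)"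
    by (rule theI[of _ p]) (use p emb_poly.injectivity in metis)+
  thus ?thesis unfolding min_poly_coset_def root_poly_def .
qed

lemma degree_min_poly: "degree (min_poly a) = card (coset a)"
  using arg_cong[OF map_poly_min_poly[of a], of degree] degree_root_poly[OF finite_coset] by simp

lemma min_poly_nonzero: "min_poly a \<noteq> 0"
  using map_poly_min_poly[of a] root_poly_nonzero by auto

definition gen_poly :: "nat \<Rightarrow> 'a poly" where
  "gen_poly a = cmodulus lam n div min_poly a"

lemma gen_poly_mult_min_poly: "gen_poly a * min_poly a = cmodulus lam n"
proof -
  have "map_poly emb (min_poly a) dvd map_poly emb (cmodulus lam n)"
    unfolding map_poly_min_poly map_poly_cmodulus root_poly_split[of a] by simp
  hence "min_poly a dvd cmodulus lam n" by (rule dvd_map_poly_hom_imp_dvd)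
  thus ?thesis by (simp add: gen_poly_def)
qed

lemma map_poly_gen_poly: "map_poly emb (gen_poly a) = root_poly (root_exps - coset a)"
  unfolding gen_poly_def map_poly_div map_poly_min_poly map_poly_cmodulus root_poly_split[of a]
  using root_poly_nonzero[of "coset a"] by simp

lemma gen_poly_nonzero: "gen_poly a \<noteq> 0"
  using gen_poly_mult_min_poly[of a] cmodulus_nonzero[OF n_pos, of lam] by auto

abbreviation code :: "nat \<Rightarrow> 'a poly set" where
  "code a \<equiv> irr_code emb \<zeta> lam q t n a"

lemma code_eq: "code a = {(gen_poly a * f) mod cmodulus lam n | f. True}"
  unfolding irr_code_def gen_poly_def ..

lemma code_eq_image: "code a = (\<lambda>r. gen_poly a * r) ` {r. degree r < card (coset a)}"
proof -
  have reduce: "(gen_poly a * f) mod cmodulus lam n = gen_poly a * (f mod min_poly a)" for f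
    using gen_poly_mult_min_poly[of a] mod_mult_mult1[of "gen_poly a" f "min_poly a"] by simp
  have "degree (f mod min_poly a) < card (coset a)" for f
    using degree_mod_less[OF min_poly_nonzero, of f a] degree_min_poly[of a] card_coset_pos[of a]
    by auto
  moreover have "r mod min_poly a = r" if "degree r < card (coset a)" for r
    using that degree_min_poly[of a] by (intro mod_poly_less) simp
  ultimately show ?thesis
    unfolding code_eq reduce by (auto simp: image_iff) metis
qed

lemma card_code: "card (code a) = q ^ card (coset a)"
proof -
  have "inj_on (\<lambda>r. gen_poly a * r) {r. degree r < card (coset a)}"
    using gen_poly_nonzero[of a] by (auto simp: inj_on_def)
  hence "card (code a) = card {r :: 'a poly. degree r < card (coset a)}"
    unfolding code_eq_image by (simp add: card_image)
  thus ?thesis using card_degree_less[OF card_coset_pos] q_def by simp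
qed

lemma finite_code: "finite (code a)"
  using card_code[of a] card_UNIV_field_ge_2[where 'a='a] q_def by (intro card_ge_0_finite) simp

lemma zero_in_code: "0 \<in> code a"
  unfolding code_eq by (auto intro!: exI[of _ 0])

lemma diff_in_code:
  assumes "c \<in> code a" "d \<in> code a"
  shows "c - d \<in> code a"
proof -
  obtain r s where rs: "c = gen_poly a * r" "d = gen_poly a * s"
    "degree r < card (coset a)" "degree s < card (coset a)"
    using assms unfolding code_eq_image by blast
  hence "c - d = gen_poly a * (r - s)" by (simp add: right_diff_distrib)
  moreover have "degree (r - s) < card (coset a)" using rs by (intro degree_diff_less)
  ultimately show ?thesis unfolding code_eq_image by (intro image_eqI[of _ _ "r - s"]) simp_all
qed

lemma rho_in_code: "c \<in> code a \<Longrightarrow> rho lam n c \<in> code a"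
proof -
  assume "c \<in> code a"
  then obtain f where "c = (gen_poly a * f) mod cmodulus lam n" unfolding code_eq by blast
  hence "rho lam n c = (gen_poly a * (monom 1 1 * f)) mod cmodulus lam n"
    unfolding rho_def by (simp add: mod_mult_right_eq ac_simps)
  thus ?thesis unfolding code_eq by blast
qed

lemma funpow_rho_in_code: "c \<in> code a \<Longrightarrow> (rho lam n ^^ j) c \<in> code a"
  by (induction j) (simp_all add: rho_in_code)

lemma degree_code_less: "c \<in> code a \<Longrightarrow> degree c < n"
  unfolding code_eq using degree_mod_cmodulus_less[OF n_pos] by blast

lemma eval_code_outside_coset:
  assumes "c \<in> code a" "h \<in> root_exps - coset a"
  shows "eval_emb (\<zeta> ^ h) c = 0"
proof -
  obtain f where c: "c = (gen_poly a * f) mod cmodulus lam n" using assms(1) unfolding code_eq by blast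
  have "eval_emb (\<zeta> ^ h) (cmodulus lam n) = 0"
    using root_exps_root assms(2) by (simp add: eval_emb_cmodulus)
  moreover have "eval_emb (\<zeta> ^ h) (gen_poly a) = 0"
    unfolding eval_emb_def map_poly_gen_poly
    using assms(2) finite_root_exps by (intro poly_root_poly_eq_0) auto
  ultimately show ?thesis unfolding c by (simp add: eval_emb_mod)
qed

lemma code_eq_0_if_eval_eq_0:
  assumes c: "c \<in> code a" and eval: "eval_emb (\<zeta> ^ (1 + t * a)) c = 0"
  shows "c = 0"
proof -
  have root: "eval_emb (\<zeta> ^ h) c = 0" if "h \<in> root_exps" for h
  proof (cases "h \<in> coset a")
    case True
    \<comment> \<open>Roots in one cyclotomic coset are Frobenius conjugates.\<close>
    then obtain k where "h = ((1 + t * a) * q ^ k) mod (t * n)" by (auto simp: cyc_coset_def)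
    hence "\<zeta> ^ h = \<zeta> ^ ((1 + t * a) * q ^ k)" by (simp only: zeta_power_mod)
    also have "\<dots> = (\<zeta> ^ (1 + t * a)) ^ CARD('a) ^ k" by (simp only: power_mult q_def)
    finally have "\<zeta> ^ h = (\<zeta> ^ (1 + t * a)) ^ CARD('a) ^ k" .
    thus ?thesis using eval card_UNIV_field_ge_2[where 'a='a] by (simp add: eval_emb_power_card_power)
  qed (use that eval_code_outside_coset[OF c] in blast)
  have "map_poly emb c = 0"
  proof (rule poly_eqI_degree[where A = "(\<lambda>h. \<zeta> ^ h) ` root_exps"])
    show "poly (map_poly emb c) z = poly 0 z" if "z \<in> (\<lambda>h. \<zeta> ^ h) ` root_exps" for z
      using that root by (auto simp: eval_emb_def)
    show "degree (map_poly emb c) < card ((\<lambda>h. \<zeta> ^ h) ` root_exps)"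
      using degree_code_less[OF c] card_zeta_power_root_exps by simp
  qed (use card_zeta_power_root_exps n_pos in simp)
  thus ?thesis by simp
qed

lemma code_add_eq_0_imp_eq_0:
  assumes "coset a \<inter> coset b = {}" "c \<in> code a" "d \<in> code b" "c + d = 0"
  shows "c = 0"
proof -
  let ?h = "(1 + t * a) mod (t * n)"
  have "?h \<in> root_exps - coset b"
    using mod_in_cyc_coset[of "1 + t * a" "t * n" q] coset_subset_root_exps[of a] assms(1) by blast
  hence "eval_emb (\<zeta> ^ ?h) d = 0" by (rule eval_code_outside_coset[OF assms(3)])
  hence "eval_emb (\<zeta> ^ (1 + t * a)) d = 0" by (simp only: zeta_power_mod)
  hence "eval_emb (\<zeta> ^ (1 + t * a)) c = 0"
    using arg_cong[OF assms(4), of "eval_emb (\<zeta> ^ (1 + t * a))"] by simp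
  thus ?thesis by (rule code_eq_0_if_eval_eq_0[OF assms(2)])
qed

lemma funpow_rho_code_fixed_iff:
  assumes "c \<in> code a"
  shows "(rho lam n ^^ j) c = c \<longleftrightarrow> c = 0 \<or> t * n dvd (1 + t * a) * j"
proof -
  let ?z = "\<zeta> ^ (1 + t * a)"
  have root: "?z ^ n = emb lam"
    by (rule zeta_power_root) (unfold cong_def, rule mod_mult_self2)
  have zj: "?z ^ j = 1 \<longleftrightarrow> t * n dvd (1 + t * a) * j"
    unfolding power_mult[symmetric] by (rule zeta_power_eq_1_iff)
  have ev: "eval_emb ?z c = 0 \<longleftrightarrow> c = 0"
    using code_eq_0_if_eval_eq_0[OF assms] by auto
  have "(rho lam n ^^ j) c = c \<longleftrightarrow> (rho lam n ^^ j) c - c = 0" by simp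
  also have "\<dots> \<longleftrightarrow> eval_emb ?z ((rho lam n ^^ j) c - c) = 0"
    using code_eq_0_if_eval_eq_0[OF diff_in_code[OF funpow_rho_in_code[OF assms] assms]] by auto
  also have "\<dots> \<longleftrightarrow> (?z ^ j - 1) * eval_emb ?z c = 0"
    unfolding eval_emb_simps(3) eval_emb_funpow_rho[OF root] by (simp add: left_diff_distrib)
  also have "\<dots> \<longleftrightarrow> t * n dvd (1 + t * a) * j \<or> c = 0"
    unfolding mult_eq_0_iff right_minus_eq zj ev ..
  finally show ?thesis by blast
qed

lemma coset_reps_disjoint:
  assumes "a < b" "b \<in> coset_reps q t n"
  shows "coset a \<inter> coset b = {}"
proof (rule cyc_coset_disjoint[OF coprime_q_tn tn_pos])
  have "1 + t * a < t * n"
  proof -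
    have "1 + t * a \<le> t * (a + 1)" using t_pos by simp
    also have "\<dots> \<le> t * b" using assms(1) by (intro mult_le_mono2) simp
    also have "\<dots> < t * n" using assms(2) t_pos by (simp add: coset_reps_def)
    finally show ?thesis .
  qed
  hence "1 + t * a \<in> coset a" using mod_in_cyc_coset[of "1 + t * a" "t * n" q] by simp
  moreover have "1 + t * a \<notin> coset b" using assms by (simp add: coset_reps_def)
  ultimately show "coset a \<noteq> coset b" by blast
qed

end

section \<open>The sum of two irreducible codes\<close>

locale two_coset_code = constacyclic_setting +
  fixes a1 a2 :: nat
  assumes cosets_disjoint: "coset a1 \<inter> coset a2 = {}"
begin

abbreviation sum_code :: "'a poly set" where
  "sum_code \<equiv> code_sum (code a1) (code a2)"

lemma code_add_eq_0_iff:
  assumes "c1 \<in> code a1" "c2 \<in> code a2"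
  shows "c1 + c2 = 0 \<longleftrightarrow> c1 = 0 \<and> c2 = 0"
  using code_add_eq_0_imp_eq_0[OF cosets_disjoint assms] code_add_eq_0_imp_eq_0[of a2 a1 c2 c1] cosets_disjoint assms
  by (auto simp: add.commute inf_commute)

lemma bij_betw_code_sum: "bij_betw (\<lambda>(c1, c2). c1 + c2) (code a1 \<times> code a2) sum_code"
proof (rule bij_betw_imageI)
  show "inj_on (\<lambda>(c1, c2). c1 + c2) (code a1 \<times> code a2)"
  proof (rule inj_onI, clarify)
    fix c1 c2 d1 d2
    assume c: "c1 \<in> code a1" "c2 \<in> code a2" "d1 \<in> code a1" "d2 \<in> code a2" "c1 + c2 = d1 + d2"
    hence "(c1 - d1) + (c2 - d2) = 0" by (simp add: algebra_simps)
    thus "c1 = d1 \<and> c2 = d2" using code_add_eq_0_iff[OF diff_in_code diff_in_code] c by simp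
  qed
  show "(\<lambda>(c1, c2). c1 + c2) ` (code a1 \<times> code a2) = sum_code"
    by (auto simp: code_sum_def)
qed

lemma finite_sum_code: "finite sum_code"
  using bij_betw_finite[OF bij_betw_code_sum] finite_code by simp

lemma degree_sum_code_less:
  assumes "c \<in> sum_code"
  shows "degree c < n"
proof -
  obtain c1 c2 where "c1 \<in> code a1" "c2 \<in> code a2" "c = c1 + c2"
    using assms by (auto simp: code_sum_def)
  thus ?thesis using degree_code_less by (simp add: degree_add_less)
qed

lemma funpow_rho_sum_fixed_iff:
  assumes "c1 \<in> code a1" "c2 \<in> code a2"
  shows "(rho lam n ^^ k) (c1 + c2) = c1 + c2 \<longleftrightarrow>
    (c1 = 0 \<or> t * n dvd (1 + t * a1) * k) \<and> (c2 = 0 \<or> t * n dvd (1 + t * a2) * k)"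
proof -
  have "((rho lam n ^^ k) c1, (rho lam n ^^ k) c2) \<in> code a1 \<times> code a2" "(c1, c2) \<in> code a1 \<times> code a2"
    using funpow_rho_in_code assms by auto
  from inj_on_eq_iff[OF bij_betw_imp_inj_on[OF bij_betw_code_sum] this]
  have "(rho lam n ^^ k) c1 + (rho lam n ^^ k) c2 = c1 + c2 \<longleftrightarrow>
      (rho lam n ^^ k) c1 = c1 \<and> (rho lam n ^^ k) c2 = c2"
    by simp
  thus ?thesis unfolding funpow_rho_add funpow_rho_code_fixed_iff[OF assms(1)] funpow_rho_code_fixed_iff[OF assms(2)] .
qed

lemma funpow_rho_period: "c \<in> sum_code \<Longrightarrow> (rho lam n ^^ (t * n)) c = c"
  using funpow_rho_sum_fixed_iff by (auto simp: code_sum_def)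

lemma self_in_orbit_rho: "c \<in> sum_code \<Longrightarrow> c \<in> orbit (rho lam n) c"
  using funpow_rho_period tn_pos unfolding orbit_altdef by (auto intro!: exI[of _ "t * n"])

lemma rho_in_sum_code_nonzero:
  assumes "c \<in> sum_code - {0}"
  shows "rho lam n c \<in> sum_code - {0}"
proof -
  obtain c1 c2 where c: "c1 \<in> code a1" "c2 \<in> code a2" "c = c1 + c2"
    using assms by (auto simp: code_sum_def)
  hence "rho lam n c \<in> sum_code" by (auto simp: code_sum_def rho_add intro: rho_in_code)
  moreover have "rho lam n c \<noteq> 0"
  proof
    assume "rho lam n c = 0"
    \<comment> \<open>\<open>\<rho> ^ (t n)\<close> is the identity on the code, so \<open>\<rho>\<close> is injective there.\<close>
    have "c = (rho lam n ^^ (t * n)) c"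
      using funpow_rho_period assms by simp
    also have "\<dots> = (rho lam n ^^ (t * n - 1)) (rho lam n c)"
      using tn_pos by (metis Suc_diff_1 funpow_Suc_right comp_apply)
    finally show False using \<open>rho lam n c = 0\<close> assms by (simp add: funpow_rho_zero)
  qed
  ultimately show ?thesis by simp
qed

(* \<rho>^k fixes c1 + c2 iff t n divides orbit_gcd (c1 \<noteq> 0) (c2 \<noteq> 0) * k. *)
definition orbit_gcd :: "bool \<Rightarrow> bool \<Rightarrow> nat" where
  "orbit_gcd b1 b2 =
    (if b1 \<and> b2 then gcd (1 + t * a1) (1 + t * a2) else if b1 then 1 + t * a1 else 1 + t * a2)"

lemma coprime_orbit_gcd: "coprime (orbit_gcd b1 b2) t"
proof -
  have cop: "coprime (1 + t * a) t" for a
  proof -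
    have "gcd t (a * t + 1) = gcd t 1" by (rule gcd_add_mult)
    thus ?thesis by (simp add: coprime_iff_gcd_eq_1 gcd.commute ac_simps)
  qed
  have "coprime (gcd (1 + t * a1) (1 + t * a2)) t"
    by (rule coprime_divisors[OF gcd_dvd1 dvd_refl cop])
  thus ?thesis using cop by (simp add: orbit_gcd_def)
qed

lemma inverse_card_orbit_rho:
  assumes "c1 \<in> code a1" "c2 \<in> code a2" "c1 \<noteq> 0 \<or> c2 \<noteq> 0"
  shows "1 / real (card (orbit (rho lam n) (c1 + c2)))
       = real (gcd (orbit_gcd (c1 \<noteq> 0) (c2 \<noteq> 0)) n) / real (t * n)"
proof -
  let ?g = "orbit_gcd (c1 \<noteq> 0) (c2 \<noteq> 0)"
  have fixed: "(rho lam n ^^ k) (c1 + c2) = c1 + c2 \<longleftrightarrow> t * n dvd ?g * k" for k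
  proof -
    have "t * n dvd gcd x y * k \<longleftrightarrow> t * n dvd x * k \<and> t * n dvd y * k" for x y :: nat
      by (metis gcd_greatest_iff gcd_mult_distrib_nat mult.commute)
    thus ?thesis using assms(3) unfolding funpow_rho_sum_fixed_iff[OF assms(1,2)] orbit_gcd_def by auto
  qed
  have "0 < t * n div gcd (t * n) ?g"
    using tn_pos by (simp add: div_greater_zero_iff gcd_le1_nat)
  hence "card (orbit (rho lam n) (c1 + c2)) = t * n div gcd (t * n) ?g"
    using fixed dvd_mult_iff_div_gcd_dvd[OF tn_pos] by (intro card_orbit_eq_period) simp_all
  moreover have "gcd (t * n) ?g = gcd ?g n"
    using coprime_orbit_gcd gcd_mult_left_left_cancel[of ?g t n] by (simp add: gcd.commute)
  moreover have "gcd ?g n dvd t * n" by simp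
  ultimately show ?thesis using tn_pos by (simp add: real_of_nat_div)
qed

lemma card_orbits_sum_code:
  "real (card (orbit (rho lam n) ` (sum_code - {0}))) =
     real ((q ^ card (coset a1) - 1) * (q ^ card (coset a2) - 1) * gcd (gcd (1 + t * a1) (1 + t * a2)) n)
       / real (t * n)
   + real ((q ^ card (coset a1) - 1) * gcd (1 + t * a1) n) / real (t * n)
   + real ((q ^ card (coset a2) - 1) * gcd (1 + t * a2) n) / real (t * n)"
proof -
  let ?plus = "\<lambda>(c1, c2). c1 + c2 :: 'a poly"
  let ?w = "\<lambda>b1 b2. real (gcd (orbit_gcd b1 b2) n) / real (t * n)"
  have "bij_betw ?plus {(0, 0)} {0}" by (simp add: bij_betw_def)
  moreover have "0 \<in> sum_code" unfolding code_sum_def using zero_in_code by force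
  ultimately have bij: "bij_betw ?plus (code a1 \<times> code a2 - {(0, 0)}) (sum_code - {0})"
    using bij_betw_code_sum zero_in_code by (intro bij_betw_DiffI) auto
  have "real (card (orbit (rho lam n) ` (sum_code - {0})))
      = (\<Sum>c\<in>sum_code - {0}. 1 / real (card (orbit (rho lam n) c)))"
    using finite_sum_code rho_in_sum_code_nonzero self_in_orbit_rho by (intro card_orbits_eq_sum) auto
  also have "\<dots> = (\<Sum>p\<in>code a1 \<times> code a2 - {(0, 0)}. 1 / real (card (orbit (rho lam n) (?plus p))))"
    by (rule sum.reindex_bij_betw[OF bij, symmetric])
  also have "\<dots> = (\<Sum>p\<in>code a1 \<times> code a2 - {(0, 0)}. ?w (fst p \<noteq> 0) (snd p \<noteq> 0))"
  proof (rule sum.cong[OF refl])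
    fix p assume "p \<in> code a1 \<times> code a2 - {(0, 0)}"
    then obtain c1 c2 where "p = (c1, c2)" "c1 \<in> code a1" "c2 \<in> code a2" "c1 \<noteq> 0 \<or> c2 \<noteq> 0"
      by auto
    thus "1 / real (card (orbit (rho lam n) (?plus p))) = ?w (fst p \<noteq> 0) (snd p \<noteq> 0)"
      using inverse_card_orbit_rho by simp
  qed
  also have "\<dots> = real (card (code a1) - 1) * real (card (code a2) - 1) * ?w True True
      + real (card (code a1) - 1) * ?w True False + real (card (code a2) - 1) * ?w False True"
    by (rule sum_pairs_nonzero) (simp_all add: finite_code zero_in_code)
  finally show ?thesis by (simp add: card_code orbit_gcd_def)
qed

lemma card_hamming_wts_sum_code:
  "card (hamming_wt n ` (sum_code - {0})) \<le> card (orbit (rho lam n) ` (sum_code - {0}))"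
  "card (hamming_wt n ` (sum_code - {0})) = card (orbit (rho lam n) ` (sum_code - {0})) \<longleftrightarrow>
    (\<forall>c1\<in>sum_code - {0}. \<forall>c2\<in>sum_code - {0}.
      hamming_wt n c1 = hamming_wt n c2 \<longrightarrow> c2 \<in> orbit (rho lam n) c1)"
proof -
  have "hamming_wt n c' = hamming_wt n c" if "c \<in> sum_code - {0}" "c' \<in> orbit (rho lam n) c" for c c'
    using that hamming_wt_funpow_rho[OF n_pos lam_nonzero degree_sum_code_less]
    by (auto simp: orbit_altdef)
  note bounds = card_invariant_image_le_card_orbits[of "sum_code - {0}" "rho lam n" "hamming_wt n", OF _ _ this]
  show "card (hamming_wt n ` (sum_code - {0})) \<le> card (orbit (rho lam n) ` (sum_code - {0}))"
    "card (hamming_wt n ` (sum_code - {0})) = card (orbit (rho lam n) ` (sum_code - {0})) \<longleftrightarrow>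
    (\<forall>c1\<in>sum_code - {0}. \<forall>c2\<in>sum_code - {0}.
      hamming_wt n c1 = hamming_wt n c2 \<longrightarrow> c2 \<in> orbit (rho lam n) c1)"
    using bounds finite_sum_code self_in_orbit_rho by auto
qed

end

theorem corollary1:
  fixes lam :: "'a::{field,finite}"
    and emb :: "'a \<Rightarrow> 'b::{field,finite}"
    and \<zeta> :: 'b
    and q n t a1 a2 :: nat
  assumes q_def: "q = card (UNIV :: 'a set)"
    and n_pos: "0 < n"
    and cop: "coprime n q"
    and lam_nz: "lam \<noteq> 0"
    and t_def: "t = mord lam"
    and emb_add: "\<And>x y. emb (x + y) = emb x + emb y"
    and emb_mult: "\<And>x y. emb (x * y) = emb x * emb y"
    and emb_one: "emb 1 = 1"
    and zeta_ord: "\<zeta> \<noteq> 0" "mord \<zeta> = t * n"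
    and zeta_n: "\<zeta> ^ n = emb lam"
    and a1: "a1 \<in> coset_reps q t n"
    and a2: "a2 \<in> coset_reps q t n"
    and a12: "a1 < a2"
  shows
    "let C = code_sum (irr_code emb \<zeta> lam q t n a1) (irr_code emb \<zeta> lam q t n a2);
         Cs = C - {0};
         d1 = card (cyc_coset q (t * n) (1 + t * a1));
         d2 = card (cyc_coset q (t * n) (1 + t * a2));
         N = num_rho_orbits lam n Cs
     in real N =
          real ((q ^ d1 - 1) * (q ^ d2 - 1) * gcd (gcd (1 + t * a1) (1 + t * a2)) n) / real (t * n)
        + real ((q ^ d1 - 1) * gcd (1 + t * a1) n) / real (t * n)
        + real ((q ^ d2 - 1) * gcd (1 + t * a2) n) / real (t * n)
      \<and> card (hamming_wt n ` Cs) \<le> N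
      \<and> (card (hamming_wt n ` Cs) = N \<longleftrightarrow>
           (\<forall>c1\<in>Cs. \<forall>c2\<in>Cs. hamming_wt n c1 = hamming_wt n c2 \<longrightarrow>
              (\<exists>j::nat. (rho lam n ^^ j) c1 = c2)))"
proof -
  have "emb 0 + emb 0 = emb 0 + 0" using emb_add[of 0 0] by simp
  hence "emb 0 = 0" by (rule add_left_imp_eq)
  then interpret constacyclic_setting emb lam \<zeta> q n t
    using assms by unfold_locales auto
  interpret two_coset_code emb lam \<zeta> q n t a1 a2
    by unfold_locales (rule coset_reps_disjoint[OF a12 a2])
  have orbit_eq: "rho_orbit lam n c = orbit (rho lam n) c" if "c \<in> sum_code" for c
    unfolding rho_orbit_def orbit_altdef_self_in[OF self_in_orbit_rho[OF that]] ..
  have orbits: "rho_orbit lam n ` (sum_code - {0}) = orbit (rho lam n) ` (sum_code - {0})"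
    using orbit_eq by (intro image_cong) auto
  have reach: "c2 \<in> orbit (rho lam n) c1 \<longleftrightarrow> (\<exists>j. (rho lam n ^^ j) c1 = c2)"
    if "c1 \<in> sum_code" for c1 c2
    unfolding orbit_altdef_self_in[OF self_in_orbit_rho[OF that]] by auto
  show ?thesis
    unfolding Let_def num_rho_orbits_def orbits
    using card_orbits_sum_code card_hamming_wts_sum_code reach by simp
qed

end
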